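(* Let $R$ be a commutative ring with identity and $M$ an $R$-module. If $M$ satisfies the dual of strong Property $\mathcal{A}$, then $W_R(M)$ is an ideal of $R$ (i.e. $M$ is secondal). Conversely, if $R$ is a principal ideal domain and $M$ is a secondal $R$-module, then $M$ satisfies the dual of strong Property $\mathcal{A}$.
   Context: All rings are commutative with identity. For an $R$-module $M$, $W_R(M)=\{r\in R : rM\neq M\}$. A proper submodule $L$ of $M$ is completely irreducible if whenever $L=\bigcap_{i\in I}L_i$ for a family $\{L_i\}_{i\in I}$ of submodules of $M$, then $L=L_i$ for some $i$. An $R$-module $M$ satisfies the dual of strong Property $\mathcal{A}$ if for any $a_1,\dots,a_n\in W_R(M)$ there exists a completely irreducible submodule $L$ of $M$ with $a_iM\subseteq L\neq M$ for all $i=1,\dots,n$. A nonzero $R$-module (or submodule) $N$ is secondal if $W_R(N)$ is an ideal of $R$. *)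

theory Defs
  imports Main
begin

text \<open>Modules are represented as in HOL.Modules: the ring R is a type 'a of class
comm_ring_1, the module M is the whole type 'b with scalar multiplication scale,
assumed to satisfy the module axioms (is_module).\<close>

definition is_module :: "('a::comm_ring_1 \<Rightarrow> 'b::ab_group_add \<Rightarrow> 'b) \<Rightarrow> bool" where
  "is_module scale \<longleftrightarrow>
     (\<forall>a x y. scale a (x + y) = scale a x + scale a y) \<and>
     (\<forall>a b x. scale (a + b) x = scale a x + scale b x) \<and>
     (\<forall>a b x. scale a (scale b x) = scale (a * b) x) \<and>
     (\<forall>x. scale 1 x = x)"

definition submodule :: "('a::comm_ring_1 \<Rightarrow> 'b::ab_group_add \<Rightarrow> 'b) \<Rightarrow> 'b set \<Rightarrow> bool" where
  "submodule scale S \<longleftrightarrow> 0 \<in> S \<and> (\<forall>x\<in>S. \<forall>y\<in>S. x + y \<in> S) \<and> (\<forall>c. \<forall>x\<in>S. scale c x \<in> S)"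

definition W_R :: "('a::comm_ring_1 \<Rightarrow> 'b::ab_group_add \<Rightarrow> 'b) \<Rightarrow> 'a set" where
  "W_R scale = {r. range (scale r) \<noteq> UNIV}"

definition ring_ideal :: "'a::comm_ring_1 set \<Rightarrow> bool" where
  "ring_ideal I \<longleftrightarrow> 0 \<in> I \<and> (\<forall>x\<in>I. \<forall>y\<in>I. x + y \<in> I) \<and> (\<forall>r. \<forall>x\<in>I. r * x \<in> I)"

definition completely_irreducible ::
  "('a::comm_ring_1 \<Rightarrow> 'b::ab_group_add \<Rightarrow> 'b) \<Rightarrow> 'b set \<Rightarrow> bool" where
  "completely_irreducible scale L \<longleftrightarrow>
     submodule scale L \<and> L \<noteq> UNIV \<and>
     (\<forall>F. (\<forall>X\<in>F. submodule scale X) \<and> L = \<Inter>F \<longrightarrow> L \<in> F)"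

definition dual_strong_A :: "('a::comm_ring_1 \<Rightarrow> 'b::ab_group_add \<Rightarrow> 'b) \<Rightarrow> bool" where
  "dual_strong_A scale \<longleftrightarrow>
     (\<forall>A. finite A \<and> A \<noteq> {} \<and> A \<subseteq> W_R scale \<longrightarrow>
        (\<exists>L. completely_irreducible scale L \<and> (\<forall>a\<in>A. range (scale a) \<subseteq> L)))"

definition secondal :: "('a::comm_ring_1 \<Rightarrow> 'b::ab_group_add \<Rightarrow> 'b) \<Rightarrow> bool" where
  "secondal scale \<longleftrightarrow> (UNIV :: 'b set) \<noteq> {0} \<and> ring_ideal (W_R scale)"

definition is_pid :: "'a::comm_ring_1 itself \<Rightarrow> bool" where
  "is_pid _ \<longleftrightarrow> (0::'a) \<noteq> 1 \<and> (\<forall>x y::'a. x * y = 0 \<longrightarrow> x = 0 \<or> y = 0) \<and>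
     (\<forall>I::'a set. ring_ideal I \<longrightarrow> (\<exists>g. I = {g * r | r. True}))"

end

theory Submission
  imports Defs
begin

text \<open>If a completely irreducible L contains aM and bM, it contains (a+b)M, so a+b stays in
W(M); hence W(M) is an ideal. Conversely, over a PID the ideal generated by
a_1, ..., a_n in W(M) is principal, say (g), and g \<in> W(M) because W(M) is an ideal. Then
every a_i M lies in the proper submodule gM, and by Zorn's lemma a submodule maximal
among those containing gM and avoiding a fixed m \<notin> gM is completely irreducible.\<close>

lemma module_scale_add_right:
  "is_module scale \<Longrightarrow> scale a (x + y) = scale a x + scale a y"
  unfolding is_module_def by blast

lemma module_scale_add_left:
  "is_module scale \<Longrightarrow> scale (a + b) x = scale a x + scale b x"
  unfolding is_module_def by blast

lemma module_scale_scale: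
  "is_module scale \<Longrightarrow> scale a (scale b x) = scale (a * b) x"
  unfolding is_module_def by blast

lemma module_scale_zero_right:
  assumes "is_module scale" shows "scale a 0 = 0"
  using module_scale_add_right[OF assms, of a 0 0] by simp

lemma module_scale_zero_left:
  assumes "is_module scale" shows "scale 0 x = 0"
  using module_scale_add_left[OF assms, of 0 0 x] by simp

lemma range_scale_mult_subset:
  assumes "is_module scale" shows "range (scale (r * a)) \<subseteq> range (scale a)"
proof
  fix y assume "y \<in> range (scale (r * a))"
  then obtain x where "y = scale (a * r) x" by (auto simp: mult.commute)
  also have "\<dots> = scale a (scale r x)" using module_scale_scale[OF assms] by metis
  finally show "y \<in> range (scale a)" by auto
qed

lemma range_scale_add_subset:
  assumes "is_module scale" "submodule scale L"
    and "range (scale a) \<subseteq> L" "range (scale b) \<subseteq> L"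
  shows "range (scale (a + b)) \<subseteq> L"
proof
  fix z assume "z \<in> range (scale (a + b))"
  then obtain u where "z = scale a u + scale b u" using module_scale_add_left[OF assms(1)] by auto
  moreover have "scale a u \<in> L" "scale b u \<in> L" using assms(3,4) by auto
  ultimately show "z \<in> L" using assms(2) unfolding submodule_def by blast
qed

lemma submodule_range_scale:
  assumes "is_module scale" shows "submodule scale (range (scale d))"
  unfolding submodule_def
proof (intro conjI ballI allI)
  show "0 \<in> range (scale d)" using module_scale_zero_right[OF assms] by (metis rangeI)
next
  fix x y assume "x \<in> range (scale d)" "y \<in> range (scale d)"
  then obtain u v where "x + y = scale d (u + v)" using module_scale_add_right[OF assms] by auto
  then show "x + y \<in> range (scale d)" by auto
next
  fix c x assume "x \<in> range (scale d)"
  then obtain u where "scale c x = scale (c * d) u" using module_scale_scale[OF assms] by auto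
  then show "scale c x \<in> range (scale d)" using range_scale_mult_subset[OF assms] by blast
qed

lemma submodule_Union_chain:
  assumes "\<C> \<noteq> {}" "subset.chain {T. submodule scale T} \<C>"
  shows "submodule scale (\<Union>\<C>)"
proof -
  have sub: "\<And>T. T \<in> \<C> \<Longrightarrow> submodule scale T" using assms(2) unfolding subset.chain_def by auto
  show ?thesis unfolding submodule_def
  proof (intro conjI ballI allI)
    show "0 \<in> \<Union>\<C>" using assms(1) sub unfolding submodule_def by auto
  next
    fix x y assume "x \<in> \<Union>\<C>" "y \<in> \<Union>\<C>"
    then obtain X Y where XY: "X \<in> \<C>" "Y \<in> \<C>" "x \<in> X" "y \<in> Y" by auto
    have "X \<subseteq> Y \<or> Y \<subseteq> X" using assms(2) XY(1,2) unfolding subset.chain_def by blast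
    then obtain Z where Z: "Z \<in> \<C>" "x \<in> Z" "y \<in> Z" using XY by blast
    then have "x + y \<in> Z" using sub[OF Z(1)] unfolding submodule_def by blast
    then show "x + y \<in> \<Union>\<C>" using Z(1) by blast
  next
    fix c x assume "x \<in> \<Union>\<C>"
    then obtain X where "X \<in> \<C>" "x \<in> X" by blast
    then show "scale c x \<in> \<Union>\<C>" using sub unfolding submodule_def by blast
  qed
qed

lemma completely_irreducible_if_maximal_avoiding:
  assumes L: "submodule scale L" "m \<notin> L"
    and max: "\<And>X. submodule scale X \<Longrightarrow> L \<subseteq> X \<Longrightarrow> m \<notin> X \<Longrightarrow> X = L"
  shows "completely_irreducible scale L"
  unfolding completely_irreducible_def
proof (intro conjI allI impI)
  show "L \<noteq> UNIV" using L by auto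
  fix F assume F: "(\<forall>X\<in>F. submodule scale X) \<and> L = \<Inter>F"
  then obtain X where "X \<in> F" "m \<notin> X" using L(2) by auto
  moreover have "X = L" using F calculation by (intro max) auto
  ultimately show "L \<in> F" by simp
qed (use L in simp)

lemma completely_irreducible_superset:
  assumes S: "submodule scale S" and m: "m \<notin> S"
  shows "\<exists>L. completely_irreducible scale L \<and> S \<subseteq> L"
proof -
  define \<A> where "\<A> = {T. submodule scale T \<and> S \<subseteq> T \<and> m \<notin> T}"
  have "\<Union>\<C> \<in> \<A>" if ne: "\<C> \<noteq> {}" and ch: "subset.chain \<A> \<C>" for \<C>
  proof -
    have C: "\<C> \<subseteq> \<A>" using ch unfolding subset.chain_def by blast
    have "subset.chain {T. submodule scale T} \<C>"
      using ch unfolding subset.chain_def \<A>_def by blast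
    then have "submodule scale (\<Union>\<C>)" using ne by (rule submodule_Union_chain[rotated])
    moreover have "S \<subseteq> \<Union>\<C>" "m \<notin> \<Union>\<C>" using ne C unfolding \<A>_def by auto
    ultimately show ?thesis unfolding \<A>_def by blast
  qed
  moreover have "\<A> \<noteq> {}" using S m unfolding \<A>_def by auto
  ultimately obtain L where L: "L \<in> \<A>" and max: "\<forall>X\<in>\<A>. L \<subseteq> X \<longrightarrow> X = L"
    using subset_Zorn_nonempty by blast
  have "completely_irreducible scale L"
  proof (rule completely_irreducible_if_maximal_avoiding)
    show "submodule scale L" "m \<notin> L" using L unfolding \<A>_def by auto
    fix X assume "submodule scale X" "L \<subseteq> X" "m \<notin> X"
    moreover have "S \<subseteq> X" using L \<open>L \<subseteq> X\<close> unfolding \<A>_def by auto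
    ultimately show "X = L" using max unfolding \<A>_def by blast
  qed
  moreover have "S \<subseteq> L" using L unfolding \<A>_def by auto
  ultimately show ?thesis by blast
qed

lemma secondal_if_dual_strong_A:
  assumes mod: "is_module scale" and nz: "(UNIV :: 'b set) \<noteq> {0}"
    and D: "dual_strong_A (scale :: 'a::comm_ring_1 \<Rightarrow> 'b::ab_group_add \<Rightarrow> 'b)"
  shows "secondal scale"
  unfolding secondal_def ring_ideal_def
proof (intro conjI ballI allI nz)
  show "0 \<in> W_R scale" using nz module_scale_zero_left[OF mod] unfolding W_R_def by auto
next
  fix r x assume "x \<in> W_R scale"
  then show "r * x \<in> W_R scale" using range_scale_mult_subset[OF mod, of r x] unfolding W_R_def by auto
next
  fix x y assume "x \<in> W_R scale" "y \<in> W_R scale"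
  then obtain L where L: "completely_irreducible scale L" "range (scale x) \<subseteq> L" "range (scale y) \<subseteq> L"
    using D unfolding dual_strong_A_def by (metis empty_not_insert finite.emptyI finite.insertI
        insert_subset empty_subsetI insertCI)
  then have "range (scale (x + y)) \<subseteq> L" "L \<noteq> UNIV"
    using range_scale_add_subset[OF mod] unfolding completely_irreducible_def by auto
  then show "x + y \<in> W_R scale" unfolding W_R_def by auto
qed

text \<open>The ideal generated by A only for finite A: sums over infinite sets are 0.\<close>

definition ideal_span :: "'a::comm_ring_1 set \<Rightarrow> 'a set" where
  "ideal_span A = {(\<Sum>a\<in>A. c a * a) | c. True}"

lemma ring_ideal_ideal_span: "ring_ideal (ideal_span A)"
  unfolding ring_ideal_def ideal_span_def
proof (intro conjI ballI allI)
  show "0 \<in> {(\<Sum>a\<in>A. c a * a) | c. True}" by (intro CollectI exI[of _ "\<lambda>_. 0"]) simp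
next
  fix x y assume "x \<in> {(\<Sum>a\<in>A. c a * a) | c. True}" "y \<in> {(\<Sum>a\<in>A. c a * a) | c. True}"
  then obtain c d where "x + y = (\<Sum>a\<in>A. (c a + d a) * a)"
    by (auto simp: sum.distrib distrib_right)
  then show "x + y \<in> {(\<Sum>a\<in>A. c a * a) | c. True}"
    by (intro CollectI exI[of _ "\<lambda>a. c a + d a"]) simp
next
  fix r x assume "x \<in> {(\<Sum>a\<in>A. c a * a) | c. True}"
  then obtain c where "r * x = (\<Sum>a\<in>A. (r * c a) * a)" by (auto simp: sum_distrib_left mult.assoc)
  then show "r * x \<in> {(\<Sum>a\<in>A. c a * a) | c. True}"
    by (intro CollectI exI[of _ "\<lambda>a. r * c a"]) simp
qed

lemma mem_ideal_span:
  assumes "finite A" "a \<in> A" shows "a \<in> ideal_span A"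
proof -
  have "(\<Sum>b\<in>A. (if b = a then 1 else 0) * b) = (\<Sum>b\<in>A. if b = a then b else 0)"
    by (intro sum.cong) simp_all
  also have "\<dots> = a" using assms by (simp add: sum.delta)
  finally show ?thesis unfolding ideal_span_def
    by (intro CollectI exI[of _ "\<lambda>b. if b = a then 1 else 0"]) simp
qed

lemma ideal_span_subset:
  assumes I: "ring_ideal I" and A: "finite A" "A \<subseteq> I"
  shows "ideal_span A \<subseteq> I"
proof
  fix x assume "x \<in> ideal_span A"
  then obtain c where x: "x = (\<Sum>a\<in>A. c a * a)" unfolding ideal_span_def by auto
  have "(\<Sum>a\<in>B. c a * a) \<in> I" if "finite B" "B \<subseteq> I" for B
    using that I by (induction B rule: finite_induct) (auto simp: ring_ideal_def)
  then show "x \<in> I" using x A by blast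
qed

lemma dual_strong_A_if_secondal_pid:
  assumes mod: "is_module scale" and pid: "is_pid TYPE('a)"
    and sec: "secondal (scale :: 'a::comm_ring_1 \<Rightarrow> 'b::ab_group_add \<Rightarrow> 'b)"
  shows "dual_strong_A scale"
  unfolding dual_strong_A_def
proof (intro allI impI)
  fix A assume A: "finite A \<and> A \<noteq> {} \<and> A \<subseteq> W_R scale"
  obtain g where g: "ideal_span A = {g * r | r. True}"
    using pid ring_ideal_ideal_span unfolding is_pid_def by blast
  have "g \<in> ideal_span A" using g by (metis (mono_tags, lifting) mem_Collect_eq mult_1_right)
  moreover have "ideal_span A \<subseteq> W_R scale"
    using sec A ideal_span_subset unfolding secondal_def by blast
  ultimately obtain m where "m \<notin> range (scale g)" unfolding W_R_def by auto
  then obtain L where L: "completely_irreducible scale L" "range (scale g) \<subseteq> L"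
    using completely_irreducible_superset[OF submodule_range_scale[OF mod]] by blast
  have "range (scale a) \<subseteq> L" if "a \<in> A" for a
  proof -
    have "a \<in> ideal_span A" using A that by (simp add: mem_ideal_span)
    then obtain r where "a = r * g" using g by (auto simp: mult.commute)
    then show ?thesis using range_scale_mult_subset[OF mod, of r g] L(2) by blast
  qed
  then show "\<exists>L. completely_irreducible scale L \<and> (\<forall>a\<in>A. range (scale a) \<subseteq> L)"
    using L(1) by blast
qed

theorem theorem2p5:
  fixes scale :: "'a::comm_ring_1 \<Rightarrow> 'b::ab_group_add \<Rightarrow> 'b"
  assumes "is_module scale"
  shows "((UNIV :: 'b set) \<noteq> {0} \<and> dual_strong_A scale \<longrightarrow> secondal scale) \<and>
         (is_pid TYPE('a) \<and> secondal scale \<longrightarrow> dual_strong_A scale)"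
  using secondal_if_dual_strong_A[OF assms] dual_strong_A_if_secondal_pid[OF assms] by blast

end
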